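(* Let $x_{k-1},x_k,x_{k+1}$ be consecutive Newton–Anderson iterates with $x_k,x_{k-1}\in B_{\hat r}(x^* )\setminus S$ under Assumption (A), and let $r^e_{k+1}$, $E_{k+1}$ and $S^w_{k+1}$ be as in the context. Suppose $r^e_{k+1}<1$ and there is an element $\tilde F\in S^w_{k+1}$ such that $\|\tilde F\|=\|E_{k+1}\|$ and $\|P_Ne_{k+1}-E_{k+1}\|=\|P_Nw^\alpha_{k+1}-\tilde F\|$. Then $$\|E_{k+1}\|\le\frac{\|P_Nw^\alpha_{k+1}\|}{1-r^e_{k+1}}.$$
   Context: $f:\mathbb{R}^n\to\mathbb{R}^n$ is $C^3$ with $f(x^* )=0$; norms are Euclidean; $N=\operatorname{null}f'(x^* )\neq\{0\}$, $R=\operatorname{range}f'(x^* )$, $\mathbb{R}^n=N\oplus R$, $P_N,P_R$ orthogonal projections; $S=\{x:\det f'(x)=0\}$. Iterates: $e_k=x_k-x^*$, $w_{k+1}=-f'(x_k)^{-1}f(x_k)$; Newton–Anderson: $x_1=x_0+w_1$, and for $k\ge1$, $\gamma_{k+1}=(w_{k+1}-w_k)^Tw_{k+1}/\|w_{k+1}-w_k\|^2$, $x_{k+1}=x_k+w_{k+1}-\gamma_{k+1}(x_k-x_{k-1}+w_{k+1}-w_k)$; $w^\alpha_{k+1}=(1-\gamma_{k+1})w_{k+1}+\gamma_{k+1}w_k$. $\hat D(x):N\to N$, $v\mapsto P_Nf''(x^* )(x-x^*,v)$. Assumption (A): for $x\in B_{\hat r}(x^* )\setminus S$, $\hat D(x)$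 is invertible on $N$, and $f'(x)^{-1}=\hat D(x)^{-1}P_N+\mathcal{O}(1)$ for $\|x-x^*\|<\hat r$. $T_kv=\tfrac12\hat D(x_k)^{-1}P_Nf''(x_k)(e_k,v)$. Let $P_Ne_k^\alpha=(1-\gamma_{k+1})P_Ne_k+\gamma_{k+1}P_Ne_{k-1}$ and $(T_kP_Re_k)^\alpha=(1-\gamma_{k+1})T_kP_Re_k+\gamma_{k+1}T_{k-1}P_Re_{k-1}$. Set $q:=e_{k+1}-\tfrac12P_Ne_k^\alpha-(T_kP_Re_k)^\alpha$ and $\tilde q:=w^\alpha_{k+1}+\tfrac12P_Ne_k^\alpha-\big((1-\gamma_{k+1})(T_k-I)P_Re_k+\gamma_{k+1}(T_{k-1}-I)P_Re_{k-1}\big)$. Let $a_1=\tfrac{1-\gamma_{k+1}}{2}P_Ne_k$, $a_2=\tfrac{\gamma_{k+1}}{2}P_Ne_{k-1}$, $a_3=(1-\gamma_{k+1})T_kP_Re_k$, $a_4=\gamma_{k+1}T_{k-1}P_Re_{k-1}$, $a_5=P_Nq$ (so $P_Ne_{k+1}=\sum a_i$), and $b_1=-a_1$, $b_2=-a_2$, $b_3=a_3$, $b_4=a_4$, $b_5=P_N\tilde q$ (so $P_Nw^\alpha_{k+1}=\sum b_i$). $S^e_{k+1}$ (resp. $S^w_{k+1}$) is the set of sums $\sum_{i\in I}a_i$ (resp. $\sum_{i\in I}b_i$) over nonempty proper subsets $I\subsetneq\{1,\dots,5\}$. $r^e_{k+1}=\min\{\|P_Ne_{k+1}-E\|/\|E\|:E\in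 S^e_{k+1},E\ne0\}$ and $E_{k+1}$ is an element of $S^e_{k+1}$ attaining this minimum. *)

theory Defs
  imports "HOL-Analysis.Analysis"
begin

definition orth_proj :: "('a::real_inner) set \<Rightarrow> 'a \<Rightarrow> 'a" where
  "orth_proj V x = (THE y. y \<in> V \<and> (\<forall>z\<in>V. inner (x - y) z = 0))"

end

theory Submission
  imports Defs
begin

lemma norm_le_divide_one_minus:
  fixes E F u :: "'a::real_normed_vector"
  assumes "norm F = norm E" and "norm (u - F) \<le> r * norm E" and "r < 1"
  shows "norm E \<le> norm u / (1 - r)"
proof -
  have "norm E \<le> norm (u - F) + norm u"
    using assms(1) norm_triangle_sub[of F u] by (simp add: norm_minus_commute)
  also have "\<dots> \<le> r * norm E + norm u"
    using assms(2) by simp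
  finally have "norm E * (1 - r) \<le> norm u"
    by (simp add: algebra_simps)
  then show ?thesis
    using assms(3) by (simp add: field_simps)
qed

theorem proposition4p3:
  fixes f :: "real^'n \<Rightarrow> real^'n"
    and J :: "real^'n \<Rightarrow> real^'n^'n"
    and H :: "real^'n \<Rightarrow> real^'n \<Rightarrow> real^'n \<Rightarrow> real^'n"
    and K :: "real^'n \<Rightarrow> real^'n \<Rightarrow> real^'n \<Rightarrow> real^'n \<Rightarrow> real^'n"
    and xs :: "real^'n" and x :: "nat \<Rightarrow> real^'n" and k :: nat and rhat :: real
    and E Ftil :: "real^'n"
    and a b :: "nat \<Rightarrow> real^'n"
  assumes deriv1: "\<And>y. (f has_derivative (\<lambda>h. J y *v h)) (at y)"
    and deriv2: "\<And>y v. ((\<lambda>z. J z *v v) has_derivative (\<lambda>h. H y h v)) (at y)"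
    and deriv3: "\<And>y u v. ((\<lambda>z. H z u v) has_derivative (\<lambda>h. K y h u v)) (at y)"
    and cont3: "\<And>h u v. continuous_on UNIV (\<lambda>z. K z h u v)"
    and root: "f xs = 0"
  defines "N \<equiv> {v. J xs *v v = 0}"
    defines "R \<equiv> range (\<lambda>v. J xs *v v)"
  assumes N_nontriv: "N \<noteq> {0}"
    and dsum1: "N \<inter> R = {0}"
    and dsum2: "{u + v | u v. u \<in> N \<and> v \<in> R} = UNIV"
  defines "PN \<equiv> orth_proj N"
    defines "PR \<equiv> orth_proj R"
    defines "S \<equiv> {y. det (J y) = 0}"
    defines "e \<equiv> (\<lambda>j. x j - xs)"
    defines "w \<equiv> (\<lambda>j. - (matrix_inv (J (x (j - 1))) *v f (x (j - 1))))"
    defines "gam \<equiv> (\<lambda>j. inner (w (j + 1) - w j) (w (j + 1)) / (norm (w (j + 1) - w j))\<^sup>2)"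
  assumes k1: "1 \<le> k"
    and NA0: "x 1 = x 0 + w 1"
    and NA: "\<And>j. 1 \<le> j \<Longrightarrow> j \<le> k \<Longrightarrow>
               x (j + 1) = x j + w (j + 1) - gam j *\<^sub>R (x j - x (j - 1) + w (j + 1) - w j)"
  defines "Dhat \<equiv> (\<lambda>y v. PN (H xs (y - xs) v))"
    defines "Dinv \<equiv> (\<lambda>y. inv_into N (Dhat y))"
  assumes A_rhat: "rhat > 0"
    and A_inv: "\<And>y. y \<in> ball xs rhat - S \<Longrightarrow> bij_betw (Dhat y) N N"
    and A_bound: "\<exists>C. \<forall>y \<in> ball xs rhat - S. \<forall>u.
                    norm (matrix_inv (J y) *v u - Dinv y (PN u)) \<le> C * norm u"
    and xk: "x k \<in> ball xs rhat - S"
    and xkm1: "x (k - 1) \<in> ball xs rhat - S"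
  defines "T \<equiv> (\<lambda>j v. (1 / 2) *\<^sub>R Dinv (x j) (PN (H (x j) (e j) v)))"
    defines "g \<equiv> gam k"
    defines "wa \<equiv> (1 - g) *\<^sub>R w (k + 1) + g *\<^sub>R w k"
    defines "PNea \<equiv> (1 - g) *\<^sub>R PN (e k) + g *\<^sub>R PN (e (k - 1))"
    defines "TPRea \<equiv> (1 - g) *\<^sub>R T k (PR (e k)) + g *\<^sub>R T (k - 1) (PR (e (k - 1)))"
    defines "q \<equiv> e (k + 1) - (1 / 2) *\<^sub>R PNea - TPRea"
    defines "qt \<equiv> wa + (1 / 2) *\<^sub>R PNea
              - ((1 - g) *\<^sub>R (T k (PR (e k)) - PR (e k))
                 + g *\<^sub>R (T (k - 1) (PR (e (k - 1))) - PR (e (k - 1))))"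
    defines "a \<equiv> (\<lambda>i. if i = 1 then ((1 - g) / 2) *\<^sub>R PN (e k)
                   else if i = 2 then (g / 2) *\<^sub>R PN (e (k - 1))
                   else if i = 3 then (1 - g) *\<^sub>R T k (PR (e k))
                   else if i = 4 then g *\<^sub>R T (k - 1) (PR (e (k - 1)))
                   else PN q)"
    defines "b \<equiv> (\<lambda>i. if i = 1 then - a 1 else if i = 2 then - a 2
                   else if i = 3 then a 3 else if i = 4 then a 4 else PN qt)"
    defines "Se \<equiv> {sum a I | I. I \<subseteq> {1..5::nat} \<and> I \<noteq> {} \<and> I \<noteq> {1..5}}"
    defines "Sw \<equiv> {sum b I | I. I \<subseteq> {1..5::nat} \<and> I \<noteq> {} \<and> I \<noteq> {1..5}}"
    defines "re \<equiv> Min {norm (PN (e (k + 1)) - E') / norm E' | E'. E' \<in> Se \<and> E' \<noteq> 0}"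
  assumes E_in: "E \<in> Se" and E_nz: "E \<noteq> 0"
    and E_min: "norm (PN (e (k + 1)) - E) / norm E = re"
    and re_lt: "re < 1"
    and F_in: "Ftil \<in> Sw"
    and F_norm: "norm Ftil = norm E"
    and F_eq: "norm (PN (e (k + 1)) - E) = norm (PN wa - Ftil)"
  shows "norm E \<le> norm (PN wa) / (1 - re)"
proof -
  have "norm (PN (e (k + 1)) - E) = re * norm E"
    using E_min E_nz by (simp add: field_simps)
  then show ?thesis
    using norm_le_divide_one_minus[OF F_norm _ re_lt] F_eq by simp
qed

end
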